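(* For all integers $0\le a<t\le T-1$, \[ G_a^{\lambda\mid t+1}=G_a^{\lambda\mid t}+(\lambda\gamma)^{t-a}\,\delta'_{a,t}, \] where \[ \delta'_{a,t}=\frac{\partial L_{t+1}}{\partial h_a}+\gamma\, g(h_{t+1};\theta_t)^\top\frac{\partial h_{t+1}}{\partial h_a}-g(h_t;\theta_{t-1})^\top\frac{\partial h_t}{\partial h_a}. \]
   Context: Fix integers $d,p,T\ge1$. Hidden states $h_0,\dots,h_T\in\mathbb{R}^d$ are produced by a recurrent network $h_t=f(x_t,h_{t-1})$ with $f$ differentiable and inputs fixed; losses $L_t=\ell_t(h_t)$, $1\le t\le T$, with $\ell_t$ differentiable. For $0\le s\le\tau\le T$, $\partial h_\tau/\partial h_s\in\mathbb{R}^{d\times d}$ is the Jacobian of $h_\tau$ as a function of $h_s$ through the recursion (identity if $\tau=s$); for $s<\tau$, $\partial L_\tau/\partial h_s\in\mathbb{R}^d$ is the gradient of $L_\tau$ as a function of $h_s$; for $v\in\mathbb{R}^d$, $v^\top\partial h_\tau/\partial h_s$ means $(\partial h_\tau/\partial h_s)^\top v$. Let $g:\mathbb{R}^d\times\mathbb{R}^p\to\mathbb{R}^d$ be any map (the synthesiser), $\gamma,\lambda\in[0,1]$, and let $\theta_{-1},\theta_0,\dots,\theta_{T-1}\in\mathbb{R}^p$ be an arbitrary sequence of weight vectors. Convention $0^0=1$. The $n$-step synthetic gradient, for $k\ge0$, $n\ge1$, $k+n\le T$, is $G_k^{(n)}=\sum_{\tau=1}^{n}\gamma^{\tau-1}\frac{\partial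 L_{k+\tau}}{\partial h_k}+\gamma^n g(h_{k+n};\theta_{k+n-1})^\top\frac{\partial h_{k+n}}{\partial h_k}$, and the interim $\lambda$-weighted synthetic gradient, for $0\le k<H\le T$, is $G_k^{\lambda\mid H}=(1-\lambda)\sum_{n=1}^{H-k-1}\lambda^{n-1}G_k^{(n)}+\lambda^{H-k-1}G_k^{(H-k)}$. *)

theory Defs
  imports "HOL-Analysis.Analysis"
begin

text \<open>Recurrent network h_t = f(x_t, h_{t-1}).  flow f x s tau y is the state at
  time tau obtained by starting from state y at time s and iterating the recursion
  (identity if tau \<le> s).\<close>
fun flow :: "('i \<Rightarrow> 'v \<Rightarrow> 'v) \<Rightarrow> (nat \<Rightarrow> 'i) \<Rightarrow> nat \<Rightarrow> nat \<Rightarrow> 'v \<Rightarrow> 'v" where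
  "flow f x s 0 y = y"
| "flow f x s (Suc tau) y = (if Suc tau \<le> s then y else f (x (Suc tau)) (flow f x s tau y))"

text \<open>v^T (dh_tau/dh_s) = (dh_tau/dh_s)^T v : its i-th component is v \<bullet> (J e_i),
  where J is the Frechet derivative of h_s \<mapsto> h_tau at h_s.\<close>
definition vjp :: "('i \<Rightarrow> real^'d \<Rightarrow> real^'d) \<Rightarrow> (nat \<Rightarrow> 'i) \<Rightarrow> (nat \<Rightarrow> real^'d)
    \<Rightarrow> nat \<Rightarrow> nat \<Rightarrow> real^'d \<Rightarrow> real^'d" where
  "vjp f x h s tau v =
     (\<chi> i. v \<bullet> frechet_derivative (flow f x s tau) (at (h s)) (axis i 1))"

definition dL :: "('i \<Rightarrow> real^'d \<Rightarrow> real^'d) \<Rightarrow> (nat \<Rightarrow> 'i) \<Rightarrow> (nat \<Rightarrow> real^'d)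
    \<Rightarrow> (nat \<Rightarrow> real^'d \<Rightarrow> real) \<Rightarrow> nat \<Rightarrow> nat \<Rightarrow> real^'d" where
  "dL f x h ell tau s =
     (\<chi> i. frechet_derivative (ell tau \<circ> flow f x s tau) (at (h s)) (axis i 1))"

text \<open>n-step synthetic gradient G_k^(n).  Weights theta are indexed by int
  (theta_{-1}, theta_0, ...).\<close>
definition nstep :: "('i \<Rightarrow> real^'d \<Rightarrow> real^'d) \<Rightarrow> (nat \<Rightarrow> 'i) \<Rightarrow> (nat \<Rightarrow> real^'d)
    \<Rightarrow> (nat \<Rightarrow> real^'d \<Rightarrow> real) \<Rightarrow> (real^'d \<Rightarrow> real^'p \<Rightarrow> real^'d) \<Rightarrow> (int \<Rightarrow> real^'p)
    \<Rightarrow> real \<Rightarrow> nat \<Rightarrow> nat \<Rightarrow> real^'d" where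
  "nstep f x h ell g theta gamma k n =
     (\<Sum>tau = 1..n. gamma ^ (tau - 1) *\<^sub>R dL f x h ell (k + tau) k)
     + gamma ^ n *\<^sub>R vjp f x h k (k + n) (g (h (k + n)) (theta (int (k + n) - 1)))"

definition lamG :: "('i \<Rightarrow> real^'d \<Rightarrow> real^'d) \<Rightarrow> (nat \<Rightarrow> 'i) \<Rightarrow> (nat \<Rightarrow> real^'d)
    \<Rightarrow> (nat \<Rightarrow> real^'d \<Rightarrow> real) \<Rightarrow> (real^'d \<Rightarrow> real^'p \<Rightarrow> real^'d) \<Rightarrow> (int \<Rightarrow> real^'p)
    \<Rightarrow> real \<Rightarrow> real \<Rightarrow> nat \<Rightarrow> nat \<Rightarrow> real^'d" where
  "lamG f x h ell g theta gamma lam k H =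
     (1 - lam) *\<^sub>R (\<Sum>n = 1..H - k - 1. lam ^ (n - 1) *\<^sub>R nstep f x h ell g theta gamma k n)
     + lam ^ (H - k - 1) *\<^sub>R nstep f x h ell g theta gamma k (H - k)"

end

theory Submission
  imports Defs
begin

text \<open>Both sides are finite linear combinations of n-step gradients, so the identity is pure
  algebra. With n = H - k,
  raising the horizon from H to H + 1 only reweights the last n-step term:
  G(lam|H+1) - G(lam|H) = lam^(n-1) ((1 - lam) G(n) + lam G(n+1) - G(n)) = lam^n (G(n+1) - G(n)),
  and consecutive n-step gradients differ by gamma^n delta'.\<close>

lemma nstep_Suc_diff:
  "nstep f x h ell g theta gamma k (Suc n) - nstep f x h ell g theta gamma k n
   = gamma ^ n *\<^sub>R
       (dL f x h ell (k + Suc n) k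
        + gamma *\<^sub>R vjp f x h k (k + Suc n) (g (h (k + Suc n)) (theta (int (k + n))))
        - vjp f x h k (k + n) (g (h (k + n)) (theta (int (k + n) - 1))))"
  unfolding nstep_def by (simp add: algebra_simps)

lemma lamG_Suc_horizon:
  assumes "k < H"
  shows "lamG f x h ell g theta gamma lam k (Suc H)
    = lamG f x h ell g theta gamma lam k H
      + lam ^ (H - k) *\<^sub>R
          (nstep f x h ell g theta gamma k (Suc (H - k)) - nstep f x h ell g theta gamma k (H - k))"
proof -
  obtain j where j: "H - k = Suc j" using assms by (cases "H - k") auto
  then have "Suc H - k = Suc (Suc j)" by simp
  then show ?thesis unfolding lamG_def j by (simp add: algebra_simps)
qed

theorem lemma1:
  fixes f :: "'i::euclidean_space \<Rightarrow> real^'d \<Rightarrow> real^'d"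
    and x :: "nat \<Rightarrow> 'i" and h :: "nat \<Rightarrow> real^'d"
    and ell :: "nat \<Rightarrow> real^'d \<Rightarrow> real"
    and g :: "real^'d \<Rightarrow> real^'p \<Rightarrow> real^'d" and theta :: "int \<Rightarrow> real^'p"
    and T a t :: nat and gamma lam :: real
  assumes "T \<ge> 1"
    and "\<forall>tt\<in>{1..T}. h tt = f (x tt) (h (tt - 1))"
    and "\<forall>z. (\<lambda>z. f (fst z) (snd z)) differentiable (at z)"
    and "\<forall>tt\<in>{1..T}. \<forall>y. ell tt differentiable (at y)"
    and "0 \<le> gamma" "gamma \<le> 1" "0 \<le> lam" "lam \<le> 1"
    and "a < t" "t \<le> T - 1"
  shows "lamG f x h ell g theta gamma lam a (t + 1)
       = lamG f x h ell g theta gamma lam a t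
         + (lam * gamma) ^ (t - a) *\<^sub>R
           (dL f x h ell (t + 1) a
            + gamma *\<^sub>R vjp f x h a (t + 1) (g (h (t + 1)) (theta (int t)))
            - vjp f x h a t (g (h t) (theta (int t - 1))))"
proof -
  have t: "a + (t - a) = t" "a + Suc (t - a) = Suc t" using \<open>a < t\<close> by simp_all
  show ?thesis
    using lamG_Suc_horizon[OF \<open>a < t\<close>, of f x h ell g theta gamma lam]
    unfolding nstep_Suc_diff t by (simp add: power_mult_distrib)
qed

end
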